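(* Let $A$ be a finite alphabet with at least two letters. No cellular automaton $F$ on $A^{\mathbb N}$ is expansive with respect to the Feldman pseudo-metric; that is, for every $\varepsilon>0$ there exist $x,y\in A^{\mathbb N}$ with $\mathfrak d_L(x,y)>0$ such that $\mathfrak d_L(F^t(x),F^t(y))\le\varepsilon$ for all $t\in\mathbb N$.
   Context: A cellular automaton with diameter $\delta\ge1$ is $F:A^{\mathbb N}\to A^{\mathbb N}$ with $F(x)_i=f(x_{[i,i+\delta)})$ for a local rule $f:A^\delta\to A$, where $x_{[i,j)}=x_i\cdots x_{j-1}$. The Levenshtein distance is $d_L(u,v)=\frac{|u|+|v|}{2}-\ell$, $\ell$ the length of a longest common subsequence of $u,v$; the Feldman pseudo-metric is $\mathfrak d_L(x,y)=\limsup_{l\to\infty}d_L(x_{[0,l)},y_{[0,l)})/l$. $F$ is expansive if $\exists\varepsilon>0$ such that for all $x,y$ with $\mathfrak d_L(x,y)>0$ there is $t\in\mathbb N$ with $\mathfrak d_L(F^t(x),F^t(y))>\varepsilon$. *)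

theory Defs
  imports "HOL-Analysis.Analysis" "HOL-Library.Sublist" "HOL-Library.Liminf_Limsup"
begin

definition factor :: "(nat \<Rightarrow> 'a) \<Rightarrow> nat \<Rightarrow> nat \<Rightarrow> 'a list" where
  "factor x i j = map x [i..<j]"

definition lcs_len :: "'a list \<Rightarrow> 'a list \<Rightarrow> nat" where
  "lcs_len u v = Max {length w | w. subseq w u \<and> subseq w v}"

text \<open>Levenshtein distance (insertions/deletions), as in the paper.\<close>
definition lev_dist :: "'a list \<Rightarrow> 'a list \<Rightarrow> real" where
  "lev_dist u v = (real (length u) + real (length v)) / 2 - real (lcs_len u v)"

definition feldman :: "(nat \<Rightarrow> 'a) \<Rightarrow> (nat \<Rightarrow> 'a) \<Rightarrow> ereal" where
  "feldman x y = limsup (\<lambda>l. ereal (lev_dist (factor x 0 l) (factor y 0 l) / real l))"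

definition is_CA :: "((nat \<Rightarrow> 'a) \<Rightarrow> (nat \<Rightarrow> 'a)) \<Rightarrow> bool" where
  "is_CA F \<longleftrightarrow> (\<exists>\<delta>::nat. \<delta> \<ge> 1 \<and> (\<exists>f :: 'a list \<Rightarrow> 'a.
      \<forall>x i. F x i = f (factor x i (i + \<delta>))))"

definition feldman_expansive :: "((nat \<Rightarrow> 'a) \<Rightarrow> (nat \<Rightarrow> 'a)) \<Rightarrow> bool" where
  "feldman_expansive F \<longleftrightarrow> (\<exists>\<epsilon>::real. \<epsilon> > 0 \<and> (\<forall>x y. feldman x y > 0 \<longrightarrow>
      (\<exists>t::nat. feldman ((F ^^ t) x) ((F ^^ t) y) > ereal \<epsilon>)))"

end

theory Submission
  imports Defs
begin

(* Take x constantly a and let y differ from x exactly on the blocks [R 2^k, (R+1) 2^k).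
   Along the prefix lengths (R+1) 2^k a fraction 1/(R+1) of y is not a, so the Feldman
   distance of x and y is positive.  After t steps of a cellular automaton of diameter \<delta>,
   F^t x and F^t y can only differ at positions within t\<delta> to the left of a block.
   Blocks shorter than t\<delta> lie in a fixed initial segment, and each longer block is only
   widened to [(R-1) 2^k, (R+1) 2^k); since the block lengths grow geometrically, the
   density of these sets is O(1/R).  Choosing R large therefore keeps the Feldman distance
   of F^t x and F^t y below any prescribed \<epsilon>, for every t. *)

lemma finite_subseq_lengths: "finite {length w | w. subseq w u \<and> subseq w v}"
proof -
  have "{length w | w. subseq w u \<and> subseq w v} \<subseteq> {..length u}"
    using list_emb_length by fastforce
  then show ?thesis
    by (rule finite_subset) simp
qed

lemma lcs_len_ge: "subseq w u \<Longrightarrow> subseq w v \<Longrightarrow> length w \<le> lcs_len u v"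
  unfolding lcs_len_def using finite_subseq_lengths by (intro Max_ge) auto

lemma lcs_len_le: "(\<And>w. subseq w u \<Longrightarrow> subseq w v \<Longrightarrow> length w \<le> n) \<Longrightarrow> lcs_len u v \<le> n"
  unfolding lcs_len_def using finite_subseq_lengths by (subst Max_le_iff) auto

lemma lev_dist_le_card_mismatches:
  assumes "length u = length v"
  shows "lev_dist u v \<le> card {i. i < length u \<and> u ! i \<noteq> v ! i}"
proof -
  define agree where "agree = (\<lambda>(p :: 'a, q). p = q)"
  define w where "w = map fst (filter agree (zip u v))"
  have "subseq w u"
    using assms unfolding w_def by (metis map_fst_zip subseq_filter_left subseq_map)
  moreover have "w = map snd (filter agree (zip u v))"
    unfolding w_def agree_def by (induct "zip u v") auto
  then have "subseq w v"
    using assms by (metis map_snd_zip subseq_filter_left subseq_map)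
  ultimately have "length w \<le> lcs_len u v"
    by (rule lcs_len_ge)
  moreover have "length w + length (filter (Not \<circ> agree) (zip u v)) = length u"
    unfolding w_def using sum_length_filter_compl[of agree "zip u v"] assms by (simp add: comp_def)
  moreover have "length (filter (Not \<circ> agree) (zip u v)) = card {i. i < length u \<and> u ! i \<noteq> v ! i}"
    unfolding length_filter_conv_card agree_def using assms by (auto intro!: arg_cong[where f = card])
  ultimately show ?thesis
    unfolding lev_dist_def using assms by simp
qed

lemma lev_dist_replicate_ge:
  "card {i. i < length v \<and> v ! i \<noteq> a} \<le> lev_dist (replicate (length v) a) v"
proof -
  let ?is_a = "\<lambda>c. c = a"
  have "lcs_len (replicate (length v) a) v \<le> length (filter ?is_a v)"
  proof (rule lcs_len_le)
    fix w assume sub_rep: "subseq w (replicate (length v) a)" and sub_v: "subseq w v"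
    have "c = a" if "c \<in> set w" for c
      using list_emb_set[OF sub_rep that] by (simp split: if_splits)
    then have "filter ?is_a w = w"
      by (simp add: filter_True)
    then have "subseq w (filter ?is_a v)"
      using subseq_filter[OF sub_v, of ?is_a] by simp
    then show "length w \<le> length (filter ?is_a v)"
      by (rule list_emb_length)
  qed
  moreover have "length (filter ?is_a v) + card {i. i < length v \<and> v ! i \<noteq> a} = length v"
    using sum_length_filter_compl[of ?is_a v] length_filter_conv_card[of "\<lambda>c. c \<noteq> a" v] by simp
  ultimately show ?thesis
    unfolding lev_dist_def by simp
qed

lemma lev_dist_factor_le: "lev_dist (factor x 0 l) (factor y 0 l) \<le> card {i. i < l \<and> x i \<noteq> y i}"
proof -
  have "{i. i < l \<and> factor x 0 l ! i \<noteq> factor y 0 l ! i} = {i. i < l \<and> x i \<noteq> y i}"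
    by (auto simp: factor_def)
  then show ?thesis
    using lev_dist_le_card_mismatches[of "factor x 0 l" "factor y 0 l"] by (simp add: factor_def)
qed

lemma lev_dist_factor_const_ge:
  "card {i. i < l \<and> y i \<noteq> a} \<le> lev_dist (factor (\<lambda>_. a) 0 l) (factor y 0 l)"
proof -
  have "{i. i < l \<and> factor y 0 l ! i \<noteq> a} = {i. i < l \<and> y i \<noteq> a}"
    by (auto simp: factor_def)
  then show ?thesis
    using lev_dist_replicate_ge[of "factor y 0 l" a] by (simp add: factor_def map_replicate_const)
qed

lemma feldman_le_of_mismatch_density:
  fixes \<epsilon> :: real
  assumes "\<forall>\<^sub>F l in sequentially. card {i. i < l \<and> x i \<noteq> y i} \<le> \<epsilon> * l"
  shows "feldman x y \<le> ereal \<epsilon>"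
proof -
  have "\<forall>\<^sub>F l in sequentially. ereal (lev_dist (factor x 0 l) (factor y 0 l) / l) \<le> ereal \<epsilon>"
    using assms eventually_gt_at_top[of 0]
  proof eventually_elim
    case (elim l)
    then show ?case
      using lev_dist_factor_le[of x l y] by (simp add: divide_le_eq)
  qed
  then show ?thesis
    unfolding feldman_def by (rule Limsup_bounded)
qed

lemma feldman_const_ge:
  fixes c :: real and s :: "nat \<Rightarrow> nat"
  assumes "strict_mono s" and "\<And>k. s k > 0"
    and "\<And>k. c * s k \<le> card {i. i < s k \<and> y i \<noteq> a}"
  shows "ereal c \<le> feldman (\<lambda>_. a) y"
proof -
  let ?ratio = "\<lambda>l. ereal (lev_dist (factor (\<lambda>_. a) 0 l) (factor y 0 l) / l)"
  have "ereal c \<le> (?ratio \<circ> s) k" for k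
    using assms(2,3)[of k] lev_dist_factor_const_ge[of "s k" y a] by (simp add: le_divide_eq)
  then have "ereal c \<le> limsup (?ratio \<circ> s)"
    by (intro le_Limsup) auto
  also have "\<dots> \<le> limsup ?ratio"
    by (rule limsup_subseq_mono[OF assms(1)])
  finally show ?thesis
    unfolding feldman_def .
qed

lemma funpow_local_rule_eq:
  fixes F :: "(nat \<Rightarrow> 'a) \<Rightarrow> nat \<Rightarrow> 'a"
  assumes local_rule: "\<And>x i. F x i = f (factor x i (i + \<delta>))"
    and "\<And>j. i \<le> j \<Longrightarrow> j \<le> i + t * \<delta> \<Longrightarrow> z j = z' j"
  shows "(F ^^ t) z i = (F ^^ t) z' i"
  using assms(2)
proof (induction t arbitrary: i)
  case 0
  then show ?case by simp
next
  case (Suc t)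
  have "(F ^^ t) z j = (F ^^ t) z' j" if "i \<le> j" "j < i + \<delta>" for j
    by (rule Suc.IH) (use Suc.prems that in auto)
  then have "factor ((F ^^ t) z) i (i + \<delta>) = factor ((F ^^ t) z') i (i + \<delta>)"
    by (simp add: factor_def)
  then show ?case
    using local_rule[of "(F ^^ t) z" i] local_rule[of "(F ^^ t) z'" i] by simp
qed

lemma funpow_local_rule_mismatches:
  fixes F :: "(nat \<Rightarrow> 'a) \<Rightarrow> nat \<Rightarrow> 'a"
  assumes "\<And>x i. F x i = f (factor x i (i + \<delta>))"
  shows "{i. (F ^^ t) x i \<noteq> (F ^^ t) y i} \<subseteq> {i. \<exists>s \<le> t * \<delta>. x (i + s) \<noteq> y (i + s)}"
proof
  fix i assume "i \<in> {i. (F ^^ t) x i \<noteq> (F ^^ t) y i}"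
  then obtain j where "i \<le> j" "j \<le> i + t * \<delta>" "x j \<noteq> y j"
    using funpow_local_rule_eq[of F f \<delta> i t x y] assms by blast
  then show "i \<in> {i. \<exists>s \<le> t * \<delta>. x (i + s) \<noteq> y (i + s)}"
    by (auto intro!: exI[of _ "j - i"])
qed

definition dyadic_blocks :: "nat \<Rightarrow> nat set" where
  "dyadic_blocks R = (\<Union>k. {R * 2 ^ k ..< (R + 1) * 2 ^ k})"

lemma card_dyadic_blocks_ge: "2 ^ k \<le> card {i. i < (R + 1) * 2 ^ k \<and> i \<in> dyadic_blocks R}"
proof -
  have "{R * 2 ^ k ..< (R + 1) * 2 ^ k} \<subseteq> {i. i < (R + 1) * 2 ^ k \<and> i \<in> dyadic_blocks R}"
    unfolding dyadic_blocks_def by auto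
  then have "card {R * 2 ^ k ..< (R + 1) * 2 ^ k} \<le> card {i. i < (R + 1) * 2 ^ k \<and> i \<in> dyadic_blocks R}"
    by (intro card_mono) auto
  then show ?thesis
    by simp
qed

lemma near_dyadic_blocks_subset:
  "{i. i < l \<and> (\<exists>s \<le> T. i + s \<in> dyadic_blocks R)} \<subseteq>
     {..<(R + 1) * T} \<union> (\<Union>k \<in> {k. (R - 1) * 2 ^ k < l}. {(R - 1) * 2 ^ k ..< (R + 1) * 2 ^ k})"
    (is "_ \<subseteq> _ \<union> ?big_blocks")
proof
  fix i assume "i \<in> {i. i < l \<and> (\<exists>s \<le> T. i + s \<in> dyadic_blocks R)}"
  then obtain s k where i: "i < l" "s \<le> T" "R * 2 ^ k \<le> i + s" "i + s < (R + 1) * 2 ^ k"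
    unfolding dyadic_blocks_def by auto
  show "i \<in> {..<(R + 1) * T} \<union> ?big_blocks"
  proof (cases "2 ^ k \<le> T")
    case True
    then have "(R + 1) * 2 ^ k \<le> (R + 1) * T"
      by (rule mult_le_mono2)
    then show ?thesis
      using i by simp
  next
    case False
    have "(R - 1) * 2 ^ k = R * 2 ^ k - 2 ^ k"
      by (simp add: diff_mult_distrib)
    then have "(R - 1) * 2 ^ k \<le> i"
      using i False by linarith
    then have "k \<in> {k. (R - 1) * 2 ^ k < l}" and "i \<in> {(R - 1) * 2 ^ k ..< (R + 1) * 2 ^ k}"
      using i by simp_all
    then show ?thesis
      by (intro UnI2 UN_I)
  qed
qed

lemma finite_exponents_below:
  fixes c l :: nat
  assumes "c \<ge> 1"
  shows "finite {k. c * 2 ^ k < l}"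
proof -
  have "k < l" if "c * 2 ^ k < l" for k
  proof -
    have "k < 2 ^ k" and "2 ^ k \<le> c * (2::nat) ^ k"
      using assms by (simp_all add: less_exp)
    with that show ?thesis
      by linarith
  qed
  then have "{k. c * 2 ^ k < l} \<subseteq> {..<l}"
    by blast
  then show ?thesis
    by (rule finite_subset) simp
qed

lemma mult_sum_powers_of_two_below:
  fixes c l :: nat
  assumes "c \<ge> 1"
  shows "c * (\<Sum>k \<in> {k. c * 2 ^ k < l}. 2 ^ k) \<le> 2 * l"
proof (cases "{k. c * 2 ^ k < l} = {}")
  case True
  then show ?thesis by simp
next
  case False
  define S where "S = {k. c * 2 ^ k < l}"
  have "finite S"
    unfolding S_def using assms by (rule finite_exponents_below)
  define K where "K = Max S"
  have "K \<in> S"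
    unfolding K_def using \<open>finite S\<close> False S_def by (intro Max_in) auto
  have "S \<subseteq> {0..<Suc K}"
    unfolding K_def using \<open>finite S\<close> by (auto simp: less_Suc_eq_le)
  then have "(\<Sum>k \<in> S. 2 ^ k) \<le> (\<Sum>k \<in> {0..<Suc K}. (2::nat) ^ k)"
    by (intro sum_mono2) auto
  also have "\<dots> = 2 * 2 ^ K - 1"
    by (simp add: sum_power2)
  also have "\<dots> < 2 * 2 ^ K"
    by simp
  finally have "c * (\<Sum>k \<in> S. 2 ^ k) \<le> 2 * (c * 2 ^ K)"
    by simp
  also have "\<dots> \<le> 2 * l"
    using \<open>K \<in> S\<close> by (simp add: S_def)
  finally show ?thesis
    by (simp add: S_def)
qed

lemma card_near_dyadic_blocks_le:
  fixes R T l :: nat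
  assumes "R \<ge> 2"
  shows "card {i. i < l \<and> (\<exists>s \<le> T. i + s \<in> dyadic_blocks R)}
    \<le> real ((R + 1) * T) + 4 * real l / real (R - 1)"
proof -
  define S where "S = {k. (R - 1) * 2 ^ k < l}"
  let ?near = "{i. i < l \<and> (\<exists>s \<le> T. i + s \<in> dyadic_blocks R)}"
  let ?block = "\<lambda>k. {(R - 1) * 2 ^ k ..< (R + 1) * 2 ^ k}"
  have "finite S"
    unfolding S_def using assms by (intro finite_exponents_below) simp
  have "?near \<subseteq> {..<(R + 1) * T} \<union> (\<Union>k \<in> S. ?block k)"
    unfolding S_def by (rule near_dyadic_blocks_subset)
  moreover have "finite ({..<(R + 1) * T} \<union> (\<Union>k \<in> S. ?block k))"
    using \<open>finite S\<close> by simp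
  ultimately have "card ?near \<le> card ({..<(R + 1) * T} \<union> (\<Union>k \<in> S. ?block k))"
    by (rule card_mono[rotated])
  also have "\<dots> \<le> card {..<(R + 1) * T} + card (\<Union>k \<in> S. ?block k)"
    by (rule card_Un_le)
  also have "\<dots> \<le> (R + 1) * T + (\<Sum>k \<in> S. card (?block k))"
    unfolding card_lessThan by (intro add_left_mono card_UN_le \<open>finite S\<close>)
  also have "\<dots> = (R + 1) * T + 2 * (\<Sum>k \<in> S. 2 ^ k)"
    using assms by (simp add: sum_distrib_left diff_mult_distrib mult_2)
  finally have "(R - 1) * card ?near \<le> (R - 1) * ((R + 1) * T + 2 * (\<Sum>k \<in> S. 2 ^ k))"
    by (rule mult_le_mono2)
  also have "\<dots> = (R - 1) * ((R + 1) * T) + 2 * ((R - 1) * (\<Sum>k \<in> S. 2 ^ k))"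
    by (simp only: add_mult_distrib2 mult.left_commute)
  also have "\<dots> \<le> (R - 1) * ((R + 1) * T) + 4 * l"
    using mult_sum_powers_of_two_below[of "R - 1" l] assms unfolding S_def by simp
  finally have "real ((R - 1) * card ?near) \<le> real ((R - 1) * ((R + 1) * T) + 4 * l)"
    by (simp only: of_nat_le_iff)
  then have "real (R - 1) * card ?near \<le> real (R - 1) * real ((R + 1) * T) + 4 * real l"
    by (simp only: of_nat_add of_nat_mult of_nat_numeral)
  moreover have "real (R - 1) > 0"
    using assms by simp
  ultimately show ?thesis
    by (simp add: field_simps)
qed

lemma local_rule_close_orbit_pair:
  fixes F :: "(nat \<Rightarrow> 'a) \<Rightarrow> nat \<Rightarrow> 'a" and a b :: 'a and \<epsilon> :: real
  assumes local_rule: "\<And>x i. F x i = f (factor x i (i + \<delta>))"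
    and "a \<noteq> b" and "\<epsilon> > 0"
  obtains x y where "feldman x y > 0" and "\<And>t. feldman ((F ^^ t) x) ((F ^^ t) y) \<le> ereal \<epsilon>"
proof -
  define R where "R = nat \<lceil>8 / \<epsilon>\<rceil> + 2"
  have "R \<ge> 2"
    by (simp add: R_def)
  have "8 / \<epsilon> < real (R - 1)"
    unfolding R_def by linarith
  then have small_density: "4 / real (R - 1) < \<epsilon> / 2"
    using \<open>\<epsilon> > 0\<close> \<open>R \<ge> 2\<close> by (simp add: field_simps)
  define y where "y i = (if i \<in> dyadic_blocks R then b else a)" for i
  have mismatch: "y i \<noteq> a \<longleftrightarrow> i \<in> dyadic_blocks R" for i
    using \<open>a \<noteq> b\<close> by (simp add: y_def)
  have "ereal (1 / real (R + 1)) \<le> feldman (\<lambda>_. a) y"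
  proof (rule feldman_const_ge)
    show "strict_mono (\<lambda>k. (R + 1) * 2 ^ k)"
      by (intro strict_monoI mult_strict_left_mono power_strict_increasing) auto
    show "(R + 1) * 2 ^ k > 0" for k
      by simp
    show "1 / real (R + 1) * real ((R + 1) * 2 ^ k) \<le> card {i. i < (R + 1) * 2 ^ k \<and> y i \<noteq> a}" for k
    proof -
      have "1 / real (R + 1) * real ((R + 1) * 2 ^ k) = real ((2::nat) ^ k)"
        by (simp add: field_simps)
      also have "\<dots> \<le> card {i. i < (R + 1) * 2 ^ k \<and> y i \<noteq> a}"
        using card_dyadic_blocks_ge[of k R] by (simp only: mismatch of_nat_le_iff)
      finally show ?thesis .
    qed
  qed
  then have "feldman (\<lambda>_. a) y > 0"
    by (rule less_le_trans[rotated]) simp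
  moreover have "feldman ((F ^^ t) (\<lambda>_. a)) ((F ^^ t) y) \<le> ereal \<epsilon>" for t
  proof (rule feldman_le_of_mismatch_density)
    define T where "T = t * \<delta>"
    let ?mismatches = "\<lambda>l. {i. i < l \<and> (F ^^ t) (\<lambda>_. a) i \<noteq> (F ^^ t) y i}"
    have bound: "card (?mismatches l) \<le> \<epsilon> * l" if "2 * real ((R + 1) * T) / \<epsilon> \<le> l" for l
    proof -
      have "?mismatches l \<subseteq> {i. i < l \<and> (\<exists>s \<le> T. i + s \<in> dyadic_blocks R)}"
        using funpow_local_rule_mismatches[of F f \<delta> t "\<lambda>_. a" y, OF local_rule] mismatch
        unfolding T_def by auto
      then have "card (?mismatches l) \<le> card {i. i < l \<and> (\<exists>s \<le> T. i + s \<in> dyadic_blocks R)}"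
        by (intro card_mono) auto
      also have "\<dots> \<le> real ((R + 1) * T) + 4 / real (R - 1) * l"
        using card_near_dyadic_blocks_le[OF \<open>R \<ge> 2\<close>, of l T] by simp
      also have "\<dots> \<le> \<epsilon> / 2 * l + \<epsilon> / 2 * l"
        using that small_density \<open>\<epsilon> > 0\<close>
        by (intro add_mono mult_right_mono) (simp_all add: field_simps)
      finally show ?thesis
        by simp
    qed
    show "\<forall>\<^sub>F l in sequentially. card (?mismatches l) \<le> \<epsilon> * l"
      using eventually_ge_at_top[of "nat \<lceil>2 * real ((R + 1) * T) / \<epsilon>\<rceil>"]
      by (rule eventually_mono) (intro bound, simp add: nat_ceiling_le_eq)
  qed
  ultimately show ?thesis
    by (rule that)
qed

theorem mainTheorem16:
  fixes F :: "(nat \<Rightarrow> 'a::finite) \<Rightarrow> (nat \<Rightarrow> 'a)"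
  assumes "CARD('a) \<ge> 2"
    and "is_CA F"
  shows "\<not> feldman_expansive F"
proof
  assume "feldman_expansive F"
  then obtain \<epsilon> :: real where "\<epsilon> > 0"
    and expansive: "\<And>x y. feldman x y > 0 \<Longrightarrow> \<exists>t. feldman ((F ^^ t) x) ((F ^^ t) y) > ereal \<epsilon>"
    unfolding feldman_expansive_def by blast
  obtain \<delta> f where local_rule: "\<And>x i. F x i = f (factor x i (i + \<delta>))"
    using assms(2) unfolding is_CA_def by blast
  obtain a b :: 'a where "a \<noteq> b"
    using assms(1) card_le_Suc0_iff_eq[of "UNIV :: 'a set"] by force
  obtain x y where "feldman x y > 0" and "\<And>t. feldman ((F ^^ t) x) ((F ^^ t) y) \<le> ereal \<epsilon>"
    using local_rule_close_orbit_pair[where F = F and f = f and \<delta> = \<delta>, OF local_rule \<open>a \<noteq> b\<close> \<open>\<epsilon> > 0\<close>] by blast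
  then show False
    using expansive by (meson not_le)
qed

end
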